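(* Assume $E\setminus T\ne\emptyset$. For $e\in E\setminus T$ let $\hat c_e=c_e/\|c_e\|_R$. Then for every circulation $g\in\mathbb{R}^E$ (i.e. $B^Tg=0$), \[ \sum_{e\in E\setminus T}p_e\big(g^TR\hat c_e\big)^2\ge\frac{\|g\|_R^2}{\tau}. \]
   Context: Let $G=(V,E,w)$ be a connected undirected graph with resistances $r_e=1/w_e>0$ and fixed edge orientations $(a,b)$. The incidence matrix $B\in\mathbb{R}^{E\times V}$ has $B_{(a,b),c}=1$ if $c=a$, $-1$ if $c=b$, $0$ otherwise; $R=\mathrm{diag}(r_e)_{e\in E}$ and $\|x\|_R=\sqrt{x^TRx}$. Let $T\subseteq E$ be a spanning tree. For vertices $a,b$, $\pi_{(a,b)}\in\mathbb{R}^E$ is the unit flow from $a$ to $b$ along the unique $a$–$b$ path in $T$. For $e=(a,b)\in E\setminus T$, $c_e=\mathbf{1}_e-\pi_{(a,b)}$ and $R_e=c_e^TRc_e$. The tree condition number is $\tau=\sum_{e\in E\setminus T}R_e/r_e$ and $p_e=\frac{R_e}{r_e\tau}$ for $e\in E\setminus T$. *)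

theory Defs
  imports Main "HOL-Analysis.Analysis"
begin

text \<open>A graph is given by a finite vertex set V, a finite set E of edge identifiers
  and, for every edge e, its fixed orientation (src e, tgt e) = (a, b).
  Vectors in R^E are functions 'e => real (only values on E matter).\<close>

definition incidence :: "('e \<Rightarrow> 'v) \<Rightarrow> ('e \<Rightarrow> 'v) \<Rightarrow> 'e \<Rightarrow> 'v \<Rightarrow> real" where
  "incidence src tgt e c = (if c = src e then 1 else if c = tgt e then -1 else 0)"

text \<open>(B^T f)_c for a vector f supported on the edge set F.\<close>
definition divergence :: "'e set \<Rightarrow> ('e \<Rightarrow> 'v) \<Rightarrow> ('e \<Rightarrow> 'v) \<Rightarrow> ('e \<Rightarrow> real) \<Rightarrow> 'v \<Rightarrow> real" where
  "divergence F src tgt f c = (\<Sum>e\<in>F. f e * incidence src tgt e c)"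

definition adj :: "'e set \<Rightarrow> ('e \<Rightarrow> 'v) \<Rightarrow> ('e \<Rightarrow> 'v) \<Rightarrow> ('v \<times> 'v) set" where
  "adj F src tgt = {(src e, tgt e) | e. e \<in> F} \<union> {(tgt e, src e) | e. e \<in> F}"

definition graph_connected :: "'v set \<Rightarrow> 'e set \<Rightarrow> ('e \<Rightarrow> 'v) \<Rightarrow> ('e \<Rightarrow> 'v) \<Rightarrow> bool" where
  "graph_connected V F src tgt = (\<forall>u\<in>V. \<forall>v\<in>V. (u, v) \<in> (adj F src tgt)\<^sup>*)"

definition spanning_tree :: "'v set \<Rightarrow> 'e set \<Rightarrow> ('e \<Rightarrow> 'v) \<Rightarrow> ('e \<Rightarrow> 'v) \<Rightarrow> 'e set \<Rightarrow> bool" where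
  "spanning_tree V E src tgt T = (T \<subseteq> E \<and> graph_connected V T src tgt \<and> card T + 1 = card V)"

text \<open>pi_(a,b): the unit flow from a to b along the unique a-b path in T, i.e. the
  unique vector supported on T whose net out-flow is 1 at a, -1 at b, 0 elsewhere.\<close>
definition tree_flow :: "'v set \<Rightarrow> 'e set \<Rightarrow> ('e \<Rightarrow> 'v) \<Rightarrow> ('e \<Rightarrow> 'v) \<Rightarrow> 'v \<Rightarrow> 'v \<Rightarrow> 'e \<Rightarrow> real" where
  "tree_flow V T src tgt a b = (THE f. (\<forall>e. e \<notin> T \<longrightarrow> f e = 0) \<and>
      (\<forall>c\<in>V. divergence T src tgt f c = (if c = a then 1 else 0) - (if c = b then 1 else 0)))"

definition cvec :: "'v set \<Rightarrow> 'e set \<Rightarrow> ('e \<Rightarrow> 'v) \<Rightarrow> ('e \<Rightarrow> 'v) \<Rightarrow> 'e \<Rightarrow> 'e \<Rightarrow> real" where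
  "cvec V T src tgt e = (\<lambda>x. (if x = e then 1 else 0) - tree_flow V T src tgt (src e) (tgt e) x)"

definition rinner :: "'e set \<Rightarrow> ('e \<Rightarrow> real) \<Rightarrow> ('e \<Rightarrow> real) \<Rightarrow> ('e \<Rightarrow> real) \<Rightarrow> real" where
  "rinner E r x y = (\<Sum>e\<in>E. x e * r e * y e)"

definition rnorm :: "'e set \<Rightarrow> ('e \<Rightarrow> real) \<Rightarrow> ('e \<Rightarrow> real) \<Rightarrow> real" where
  "rnorm E r x = sqrt (rinner E r x x)"

definition Rcyc :: "'v set \<Rightarrow> 'e set \<Rightarrow> ('e \<Rightarrow> 'v) \<Rightarrow> ('e \<Rightarrow> 'v) \<Rightarrow> ('e \<Rightarrow> real) \<Rightarrow> 'e set \<Rightarrow> 'e \<Rightarrow> real" where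
  "Rcyc V E src tgt r T e = rinner E r (cvec V T src tgt e) (cvec V T src tgt e)"

definition tree_cond :: "'v set \<Rightarrow> 'e set \<Rightarrow> ('e \<Rightarrow> 'v) \<Rightarrow> ('e \<Rightarrow> 'v) \<Rightarrow> ('e \<Rightarrow> real) \<Rightarrow> 'e set \<Rightarrow> real" where
  "tree_cond V E src tgt r T = (\<Sum>e\<in>E - T. Rcyc V E src tgt r T e / r e)"

definition pe :: "'v set \<Rightarrow> 'e set \<Rightarrow> ('e \<Rightarrow> 'v) \<Rightarrow> ('e \<Rightarrow> 'v) \<Rightarrow> ('e \<Rightarrow> real) \<Rightarrow> 'e set \<Rightarrow> 'e \<Rightarrow> real" where
  "pe V E src tgt r T e = Rcyc V E src tgt r T e / (r e * tree_cond V E src tgt r T)"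

definition chat :: "'v set \<Rightarrow> 'e set \<Rightarrow> ('e \<Rightarrow> 'v) \<Rightarrow> ('e \<Rightarrow> 'v) \<Rightarrow> ('e \<Rightarrow> real) \<Rightarrow> 'e set \<Rightarrow> 'e \<Rightarrow> 'e \<Rightarrow> real" where
  "chat V E src tgt r T e = (\<lambda>x. cvec V T src tgt e x / rnorm E r (cvec V T src tgt e))"

end

theory Submission
  imports Defs
begin

text \<open>
  A circulation supported on a spanning tree vanishes: at a leaf, conservation forces the flow on
  the leaf edge to be zero, and one inducts on the tree with that leaf removed. Hence every
  circulation satisfies \<open>g = (\<Sum>e\<in>E - T. g e \<cdot> c\<^sub>e)\<close>, so with \<open>a\<^sub>e = g\<^sup>T R c\<^sub>e\<close> we get
  \<open>\<parallel>g\<parallel>\<^sub>R\<^sup>2 = (\<Sum>e\<in>E - T. g e \<cdot> a\<^sub>e)\<close>. Bounding each term by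
  \<open>2 g e \<cdot> a\<^sub>e \<le> r\<^sub>e (g e)\<^sup>2 + a\<^sub>e\<^sup>2 / r\<^sub>e\<close> gives
  \<open>2 \<parallel>g\<parallel>\<^sub>R\<^sup>2 \<le> \<parallel>g\<parallel>\<^sub>R\<^sup>2 + (\<Sum>e\<in>E - T. a\<^sub>e\<^sup>2 / r\<^sub>e)\<close>,
  and the left-hand side of the claim is exactly \<open>(\<Sum>e\<in>E - T. a\<^sub>e\<^sup>2 / r\<^sub>e) / \<tau>\<close>.
\<close>

definition unit_flow :: "'v set \<Rightarrow> 'e set \<Rightarrow> ('e \<Rightarrow> 'v) \<Rightarrow> ('e \<Rightarrow> 'v) \<Rightarrow> 'v \<Rightarrow> 'v \<Rightarrow> ('e \<Rightarrow> real) \<Rightarrow> bool"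
  where "unit_flow V T s t a b f \<longleftrightarrow> (\<forall>e. e \<notin> T \<longrightarrow> f e = 0) \<and>
    (\<forall>c\<in>V. divergence T s t f c = (if c = a then 1 else 0) - (if c = b then 1 else 0))"

text \<open>Connectivity in the form the leaf-removal induction needs: unlike connectivity by walks,
  it is evidently inherited by the tree with a leaf removed.\<close>
definition flow_connected :: "'v set \<Rightarrow> 'e set \<Rightarrow> ('e \<Rightarrow> 'v) \<Rightarrow> ('e \<Rightarrow> 'v) \<Rightarrow> bool"
  where "flow_connected V T s t \<longleftrightarrow> (\<forall>a\<in>V. \<forall>b\<in>V. \<exists>f. unit_flow V T s t a b f)"

definition incident_edges :: "'e set \<Rightarrow> ('e \<Rightarrow> 'v) \<Rightarrow> ('e \<Rightarrow> 'v) \<Rightarrow> 'v \<Rightarrow> 'e set"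
  where "incident_edges T s t v = {e\<in>T. s e = v \<or> t e = v}"

lemma tree_flow_eq_The_unit_flow: "tree_flow V T s t a b = (THE f. unit_flow V T s t a b f)"
  unfolding tree_flow_def unit_flow_def ..

subsection \<open>Divergence\<close>

lemma incidence_eq:
  "s e \<noteq> t e \<Longrightarrow> incidence s t e c = (if c = s e then 1 else 0) - (if c = t e then 1 else 0)"
  by (auto simp: incidence_def)

lemma divergence_diff:
  "divergence T s t (\<lambda>x. f x - g x) c = divergence T s t f c - divergence T s t g c"
  unfolding divergence_def by (simp add: algebra_simps sum_subtractf)

lemma divergence_sum:
  "divergence T s t (\<lambda>x. \<Sum>e\<in>K. h e x) c = (\<Sum>e\<in>K. divergence T s t (h e) c)"
  unfolding divergence_def by (simp add: sum_distrib_right sum.swap[of _ T])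

lemma divergence_scale: "divergence T s t (\<lambda>x. k * f x) c = k * divergence T s t f c"
  unfolding divergence_def by (simp add: sum_distrib_left mult.assoc)

lemma divergence_add_indicator:
  assumes "finite T" "e \<in> T"
  shows "divergence T s t (\<lambda>x. f x + k * (if x = e then 1 else 0)) c
    = divergence T s t f c + k * incidence s t e c"
proof -
  have "(\<Sum>x\<in>T. k * (if x = e then 1 else 0) * incidence s t x c)
      = (\<Sum>x\<in>T. if x = e then k * incidence s t e c else 0)"
    by (rule sum.cong) auto
  thus ?thesis using assms unfolding divergence_def by (simp add: distrib_right sum.distrib)
qed

lemma divergence_mono_neutral:
  assumes "finite E" "T \<subseteq> E" "\<forall>x\<in>E - T. f x = 0"
  shows "divergence E s t f c = divergence T s t f c"
  unfolding divergence_def by (rule sum.mono_neutral_left[symmetric]) (use assms in auto)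

lemma divergence_incident_edges:
  assumes "finite T"
  shows "divergence T s t f v = (\<Sum>e\<in>incident_edges T s t v. f e * incidence s t e v)"
  unfolding divergence_def incident_edges_def
  by (rule sum.mono_neutral_right) (use assms in \<open>auto simp: incidence_def\<close>)

lemma leaf_edge_flow_zero:
  assumes "finite T" "incident_edges T s t v = {e0}" "s e0 \<noteq> t e0" "divergence T s t f v = 0"
  shows "f e0 = 0"
proof -
  have "s e0 = v \<or> t e0 = v" using assms(2) unfolding incident_edges_def by blast
  hence "incidence s t e0 v \<noteq> 0" using assms(3) by (auto simp: incidence_def)
  thus ?thesis using assms divergence_incident_edges[of T s t f v] by simp
qed

subsection \<open>Circulations on trees\<close>

lemma unit_flow_along_walk:
  assumes "finite T" "\<forall>e\<in>T. s e \<noteq> t e" "(a, b) \<in> (adj T s t)\<^sup>*"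
  shows "\<exists>f. unit_flow V T s t a b f"
  using assms(3)
proof (induction rule: rtrancl_induct)
  case base
  show ?case by (rule exI[of _ "\<lambda>_. 0"]) (simp add: unit_flow_def divergence_def)
next
  case (step b c)
  then obtain f where f: "unit_flow V T s t a b f" by blast
  from step.hyps(2) obtain e and k :: real where e: "e \<in> T"
    and k: "(s e = b \<and> t e = c \<and> k = 1) \<or> (t e = b \<and> s e = c \<and> k = -1)"
    unfolding adj_def by auto
  have "unit_flow V T s t a c (\<lambda>x. f x + k * (if x = e then 1 else 0))"
    using f k e assms(2) unfolding unit_flow_def
    by (auto simp: divergence_add_indicator[OF assms(1) e] incidence_def)
  thus ?case by blast
qed

lemma spanning_tree_flow_connected:
  assumes "finite E" "spanning_tree V E s t T" "\<forall>e\<in>E. s e \<noteq> t e"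
  shows "flow_connected V T s t"
  unfolding flow_connected_def
proof (intro ballI)
  fix a b assume "a \<in> V" "b \<in> V"
  have T: "T \<subseteq> E" "graph_connected V T s t"
    using assms(2) unfolding spanning_tree_def by blast+
  have "(a, b) \<in> (adj T s t)\<^sup>*"
    using T(2) \<open>a \<in> V\<close> \<open>b \<in> V\<close> unfolding graph_connected_def by blast
  moreover have "finite T" using assms(1) T(1) by (rule finite_subset[rotated])
  moreover have "\<forall>e\<in>T. s e \<noteq> t e" using assms(3) T(1) by blast
  ultimately show "\<exists>f. unit_flow V T s t a b f" by (intro unit_flow_along_walk)
qed

lemma exists_vertex_degree_le_1:
  assumes fT: "finite T" and fV: "finite V" and card: "card T + 1 = card V"
    and ends: "\<forall>e\<in>T. s e \<in> V \<and> t e \<in> V \<and> s e \<noteq> t e"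
  shows "\<exists>v\<in>V. card (incident_edges T s t v) \<le> 1"
proof (rule ccontr)
  let ?\<chi> = "\<lambda>e v. of_bool (s e = v \<or> t e = v) :: nat"
  assume "\<not> ?thesis"
  hence "(\<Sum>v\<in>V. 2) \<le> (\<Sum>v\<in>V. card (incident_edges T s t v))"
    by (intro sum_mono) force
  also have "\<dots> = (\<Sum>v\<in>V. \<Sum>e\<in>T. ?\<chi> e v)"
  proof (rule sum.cong)
    fix v
    have "incident_edges T s t v = T \<inter> {e. s e = v \<or> t e = v}"
      unfolding incident_edges_def by blast
    thus "card (incident_edges T s t v) = (\<Sum>e\<in>T. ?\<chi> e v)"
      by (simp only: sum_of_bool_eq[OF fT fT] of_nat_id)
  qed simp
  also have "\<dots> = (\<Sum>e\<in>T. \<Sum>v\<in>V. ?\<chi> e v)"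
    by (rule sum.swap)
  also have "\<dots> = (\<Sum>e\<in>T. 2)"
  proof (rule sum.cong)
    fix e assume "e \<in> T"
    hence "V \<inter> {v. s e = v \<or> t e = v} = {s e, t e}" "s e \<noteq> t e" using ends by auto
    thus "(\<Sum>v\<in>V. ?\<chi> e v) = 2" by (simp only: sum_of_bool_eq[OF fV fV] of_nat_id) simp
  qed simp
  finally show False using card by simp
qed

lemma flow_connected_incident_edges_nonempty:
  assumes "finite T" "flow_connected V T s t" "v \<in> V" "b \<in> V" "b \<noteq> v"
  shows "incident_edges T s t v \<noteq> {}"
proof
  assume "incident_edges T s t v = {}"
  hence "divergence T s t f v = 0" for f
    by (simp add: divergence_incident_edges[OF assms(1)])
  moreover obtain f where "unit_flow V T s t v b f"
    using assms unfolding flow_connected_def by blast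
  ultimately show False using assms(3,5) unfolding unit_flow_def by force
qed

lemma divergence_remove_leaf:
  assumes "finite T" "incident_edges T s t v = {e0}" "s e0 \<noteq> t e0" "v \<in> V"
    and "\<forall>c\<in>V. divergence T s t f c = d c" "d v = 0"
  shows "f e0 = 0" "\<forall>c\<in>V - {v}. divergence (T - {e0}) s t f c = d c"
proof -
  show f0: "f e0 = 0" using leaf_edge_flow_zero assms by metis
  have "e0 \<in> T" using assms(2) unfolding incident_edges_def by blast
  thus "\<forall>c\<in>V - {v}. divergence (T - {e0}) s t f c = d c"
    using assms(1,5) f0 unfolding divergence_def by (simp add: sum.remove)
qed

lemma flow_connected_remove_leaf:
  assumes "finite T" "incident_edges T s t v = {e0}" "s e0 \<noteq> t e0" "v \<in> V"
    and "flow_connected V T s t"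
  shows "flow_connected (V - {v}) (T - {e0}) s t"
  unfolding flow_connected_def
proof (intro ballI)
  fix a b assume ab: "a \<in> V - {v}" "b \<in> V - {v}"
  then obtain f where f: "unit_flow V T s t a b f"
    using assms(5) unfolding flow_connected_def by blast
  have "f e0 = 0" "\<forall>c\<in>V - {v}. divergence (T - {e0}) s t f c
      = (if c = a then 1 else 0) - (if c = b then 1 else 0)"
    using divergence_remove_leaf[OF assms(1-4), of f
        "\<lambda>c. (if c = a then 1 else 0) - (if c = b then 1 else 0)"] f ab unfolding unit_flow_def by auto
  hence "unit_flow (V - {v}) (T - {e0}) s t a b f" using f unfolding unit_flow_def by auto
  thus "\<exists>f. unit_flow (V - {v}) (T - {e0}) s t a b f" by blast
qed

lemma circulation_on_tree_vanishes:
  assumes "finite T" "finite V" "card T + 1 = card V"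
    and "\<forall>e\<in>T. s e \<in> V \<and> t e \<in> V \<and> s e \<noteq> t e"
    and "flow_connected V T s t"
    and "\<forall>c\<in>V. divergence T s t g c = 0"
  shows "\<forall>e\<in>T. g e = 0"
  using assms
proof (induction "card T" arbitrary: T V)
  case 0
  thus ?case by simp
next
  case (Suc n)
  obtain v where v: "v \<in> V" "card (incident_edges T s t v) \<le> 1"
    using exists_vertex_degree_le_1[OF Suc.prems(1-4)] by blast
  have card_V': "card (V - {v}) = Suc n" using Suc.hyps(2) Suc.prems(2,3) v(1) by simp
  hence "V - {v} \<noteq> {}" by (intro notI) simp
  then obtain b where b: "b \<in> V" "b \<noteq> v" by blast
  have "incident_edges T s t v \<noteq> {}"
    by (rule flow_connected_incident_edges_nonempty[OF Suc.prems(1,5) v(1) b])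
  moreover have "finite (incident_edges T s t v)"
    using Suc.prems(1) unfolding incident_edges_def by simp
  ultimately have "card (incident_edges T s t v) = 1"
    using v(2) by (simp add: le_Suc_eq)
  then obtain e0 where leaf: "incident_edges T s t v = {e0}"
    by (rule card_1_singletonE)
  have e0: "e0 \<in> T" "s e0 \<noteq> t e0" using leaf Suc.prems(4) unfolding incident_edges_def by auto
  note removed = divergence_remove_leaf[OF Suc.prems(1) leaf e0(2) v(1) Suc.prems(6)]
  have "n = card (T - {e0})" using Suc.hyps(2) Suc.prems(1) e0(1) by simp
  moreover have "finite (T - {e0})" "finite (V - {v})" using Suc.prems(1,2) by simp_all
  moreover have "card (T - {e0}) + 1 = card (V - {v})" using card_V' calculation(1) by simp
  moreover have "\<forall>e\<in>T - {e0}. s e \<in> V - {v} \<and> t e \<in> V - {v} \<and> s e \<noteq> t e"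
    using leaf Suc.prems(4) unfolding incident_edges_def by blast
  moreover have "flow_connected (V - {v}) (T - {e0}) s t"
    by (rule flow_connected_remove_leaf[OF Suc.prems(1) leaf e0(2) v(1) Suc.prems(5)])
  ultimately have "\<forall>e\<in>T - {e0}. g e = 0" using Suc.hyps(1) removed(2) by blast
  thus ?case using removed(1) by blast
qed

subsection \<open>The weighted inner product\<close>

lemma weighted_square_nonneg:
  fixes r y :: real
  assumes "0 \<le> r"
  shows "0 \<le> y * r * y"
  using mult_nonneg_nonneg[OF assms zero_le_square[of y]] by (simp add: mult_ac)

lemma two_mult_le_weighted_squares:
  fixes r x y :: real
  assumes "0 < r"
  shows "2 * x * y \<le> r * x\<^sup>2 + y\<^sup>2 / r"
proof -
  have "0 \<le> (r * x - y)\<^sup>2 / r" using assms by simp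
  also have "\<dots> = r * x\<^sup>2 + y\<^sup>2 / r - 2 * x * y"
    using assms by (simp add: field_simps power2_eq_square)
  finally show ?thesis by simp
qed

lemma rinner_self_nonneg: "\<forall>x\<in>E. 0 \<le> r x \<Longrightarrow> 0 \<le> rinner E r g g"
  unfolding rinner_def by (intro sum_nonneg weighted_square_nonneg) blast

lemma rinner_self_eq_combination:
  assumes "\<forall>x\<in>E. g x = (\<Sum>e\<in>F. g e * c e x)"
  shows "rinner E r g g = (\<Sum>e\<in>F. g e * rinner E r g (c e))"
proof -
  have "rinner E r g g = (\<Sum>x\<in>E. g x * r x * (\<Sum>e\<in>F. g e * c e x))"
    unfolding rinner_def
  proof (rule sum.cong[OF refl])
    fix x assume "x \<in> E"
    hence "g x = (\<Sum>e\<in>F. g e * c e x)" using assms by blast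
    thus "g x * r x * g x = g x * r x * (\<Sum>e\<in>F. g e * c e x)" by (simp only: flip: \<open>g x = _\<close>)
  qed
  also have "\<dots> = (\<Sum>x\<in>E. \<Sum>e\<in>F. g e * (g x * r x * c e x))"
    by (simp add: sum_distrib_left mult_ac)
  also have "\<dots> = (\<Sum>e\<in>F. \<Sum>x\<in>E. g e * (g x * r x * c e x))"
    by (rule sum.swap)
  also have "\<dots> = (\<Sum>e\<in>F. g e * rinner E r g (c e))"
    by (simp add: rinner_def sum_distrib_left)
  finally show ?thesis .
qed

lemma rinner_self_le_sum_sq_div:
  assumes "finite E" "F \<subseteq> E" "\<forall>e\<in>E. 0 < r e"
    and "rinner E r g g = (\<Sum>e\<in>F. g e * a e)"
  shows "rinner E r g g \<le> (\<Sum>e\<in>F. (a e)\<^sup>2 / r e)"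
proof -
  have "2 * rinner E r g g = (\<Sum>e\<in>F. 2 * g e * a e)"
    using assms(4) by (simp add: sum_distrib_left mult.assoc)
  also have "\<dots> \<le> (\<Sum>e\<in>F. r e * (g e)\<^sup>2 + (a e)\<^sup>2 / r e)"
    using assms(2,3) by (intro sum_mono two_mult_le_weighted_squares) auto
  also have "\<dots> = (\<Sum>e\<in>F. r e * (g e)\<^sup>2) + (\<Sum>e\<in>F. (a e)\<^sup>2 / r e)"
    by (rule sum.distrib)
  also have "(\<Sum>e\<in>F. r e * (g e)\<^sup>2) \<le> (\<Sum>e\<in>E. r e * (g e)\<^sup>2)"
    by (rule sum_mono2[OF assms(1,2)]) (use assms(3) in \<open>auto intro: less_imp_le\<close>)
  also have "\<dots> = rinner E r g g"
    unfolding rinner_def by (simp add: power2_eq_square mult_ac)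
  finally show ?thesis by simp
qed

subsection \<open>Fundamental cycles\<close>

locale spanning_tree_graph =
  fixes V :: "'v set" and E :: "'e set" and s t :: "'e \<Rightarrow> 'v" and T :: "'e set"
  assumes finite_V: "finite V" and finite_E: "finite E"
    and endpoints: "\<And>e. e \<in> E \<Longrightarrow> s e \<in> V \<and> t e \<in> V \<and> s e \<noteq> t e"
    and spanning: "spanning_tree V E s t T"
begin

lemma tree_subset: "T \<subseteq> E"
  using spanning unfolding spanning_tree_def by blast

lemma finite_T: "finite T"
  using finite_E tree_subset by (rule finite_subset[rotated])

lemma flow_connected_T: "flow_connected V T s t"
  by (rule spanning_tree_flow_connected[OF finite_E spanning]) (use endpoints in blast)

lemma circulation_on_T_vanishes:
  assumes "\<forall>c\<in>V. divergence T s t g c = 0"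
  shows "\<forall>e\<in>T. g e = 0"
proof (rule circulation_on_tree_vanishes[OF finite_T finite_V _ _ _ assms])
  show "card T + 1 = card V" using spanning unfolding spanning_tree_def by blast
  show "\<forall>e\<in>T. s e \<in> V \<and> t e \<in> V \<and> s e \<noteq> t e" using endpoints tree_subset by blast
  show "flow_connected V T s t" by (rule flow_connected_T)
qed

lemma unit_flow_tree_flow:
  assumes "a \<in> V" "b \<in> V"
  shows "unit_flow V T s t a b (tree_flow V T s t a b)"
proof -
  have "\<exists>!f. unit_flow V T s t a b f"
  proof (rule ex_ex1I)
    show "\<exists>f. unit_flow V T s t a b f"
      using flow_connected_T assms unfolding flow_connected_def by blast
  next
    fix f g assume fg: "unit_flow V T s t a b f" "unit_flow V T s t a b g"
    have "\<forall>x\<in>T. f x - g x = 0"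
      using fg by (intro circulation_on_T_vanishes) (simp add: unit_flow_def divergence_diff)
    moreover have "\<forall>x. x \<notin> T \<longrightarrow> f x = g x" using fg by (simp add: unit_flow_def)
    ultimately show "f = g" by (intro ext) (metis eq_iff_diff_eq_0)
  qed
  thus ?thesis unfolding tree_flow_eq_The_unit_flow by (rule theI')
qed

lemma cvec_off_tree:
  assumes "e \<in> E" "x \<notin> T"
  shows "cvec V T s t e x = (if x = e then 1 else 0)"
  using unit_flow_tree_flow[of "s e" "t e"] endpoints[OF assms(1)] assms(2)
  unfolding cvec_def unit_flow_def by simp

lemma divergence_cvec:
  assumes "e \<in> E - T" "c \<in> V"
  shows "divergence E s t (cvec V T s t e) c = 0"
proof -
  let ?\<pi> = "tree_flow V T s t (s e) (t e)"
  have \<pi>: "unit_flow V T s t (s e) (t e) ?\<pi>"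
    using unit_flow_tree_flow endpoints assms(1) by blast
  have "(\<Sum>x\<in>E. (if x = e then 1 else 0) * incidence s t x c)
      = (\<Sum>x\<in>E. if x = e then incidence s t e c else 0)"
    by (rule sum.cong) auto
  hence "divergence E s t (\<lambda>x. if x = e then 1 else 0) c = incidence s t e c"
    using assms(1) finite_E unfolding divergence_def by simp
  moreover have "divergence E s t ?\<pi> c = divergence T s t ?\<pi> c"
    using \<pi> finite_E tree_subset by (intro divergence_mono_neutral) (auto simp: unit_flow_def)
  ultimately show ?thesis
    using \<pi> assms endpoints[of e] unfolding cvec_def unit_flow_def
    by (simp add: divergence_diff incidence_eq)
qed

lemma circulation_eq_sum_cvec:
  assumes circ: "\<forall>c\<in>V. divergence E s t g c = 0" and "x \<in> E"
  shows "g x = (\<Sum>e\<in>E - T. g e * cvec V T s t e x)"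
proof -
  define h where "h y = g y - (\<Sum>e\<in>E - T. g e * cvec V T s t e y)" for y
  have h_off_tree: "\<forall>y\<in>E - T. h y = 0"
  proof
    fix y assume y: "y \<in> E - T"
    have "(\<Sum>e\<in>E - T. g e * cvec V T s t e y) = (\<Sum>e\<in>E - T. if e = y then g y else 0)"
      by (rule sum.cong) (use y in \<open>auto simp: cvec_off_tree\<close>)
    thus "h y = 0" using y finite_E by (simp add: h_def)
  qed
  have "\<forall>c\<in>V. divergence T s t h c = 0"
  proof
    fix c assume "c \<in> V"
    have "divergence T s t h c = divergence E s t h c"
      by (rule divergence_mono_neutral[OF finite_E tree_subset h_off_tree, symmetric])
    also have "\<dots> = 0"
      using circ \<open>c \<in> V\<close> unfolding h_def
      by (simp add: divergence_diff divergence_sum divergence_scale divergence_cvec)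
    finally show "divergence T s t h c = 0" .
  qed
  hence "\<forall>x\<in>T. h x = 0" by (rule circulation_on_T_vanishes)
  hence "h x = 0" using h_off_tree assms(2) by (cases "x \<in> T") simp_all
  thus ?thesis unfolding h_def by simp
qed

lemma Rcyc_ge_resistance:
  assumes "\<forall>x\<in>E. 0 < r x" "e \<in> E - T"
  shows "r e \<le> Rcyc V E s t r T e"
proof -
  have "cvec V T s t e e * r e * cvec V T s t e e \<le> Rcyc V E s t r T e"
    unfolding Rcyc_def rinner_def
    by (rule member_le_sum)
      (use assms finite_E in \<open>auto intro: weighted_square_nonneg less_imp_le\<close>)
  thus ?thesis using assms(2) by (simp add: cvec_off_tree)
qed

lemma tree_cond_pos:
  assumes "\<forall>x\<in>E. 0 < r x" "E - T \<noteq> {}"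
  shows "0 < tree_cond V E s t r T"
  unfolding tree_cond_def
proof (rule sum_pos)
  fix e assume "e \<in> E - T"
  thus "0 < Rcyc V E s t r T e / r e"
    using Rcyc_ge_resistance[OF assms(1)] assms(1)
    by (intro divide_pos_pos) (auto intro: less_le_trans)
qed (use finite_E assms(2) in auto)

end

lemma pe_mult_rinner_chat_sq:
  assumes "0 < Rcyc V E s t r T e"
  shows "pe V E s t r T e * (rinner E r g (chat V E s t r T e))\<^sup>2
    = (rinner E r g (cvec V T s t e))\<^sup>2 / r e / tree_cond V E s t r T"
proof -
  have "rinner E r g (chat V E s t r T e) = rinner E r g (cvec V T s t e) / sqrt (Rcyc V E s t r T e)"
    unfolding rinner_def chat_def Rcyc_def rnorm_def by (simp add: sum_divide_distrib)
  thus ?thesis using assms unfolding pe_def by (simp add: power_divide)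
qed

theorem lemma9p1:
  fixes V :: "'v set" and E :: "'e set" and src tgt :: "'e \<Rightarrow> 'v"
    and r :: "'e \<Rightarrow> real" and T :: "'e set" and g :: "'e \<Rightarrow> real"
  assumes "finite V" and "finite E"
    and "\<And>e. e \<in> E \<Longrightarrow> src e \<in> V \<and> tgt e \<in> V \<and> src e \<noteq> tgt e"
    and "\<And>e. e \<in> E \<Longrightarrow> r e > 0"
    and "graph_connected V E src tgt"
    and "spanning_tree V E src tgt T"
    and "E - T \<noteq> {}"
    and "\<And>c. c \<in> V \<Longrightarrow> divergence E src tgt g c = 0"
  shows "(\<Sum>e\<in>E - T. pe V E src tgt r T e * (rinner E r g (chat V E src tgt r T e))\<^sup>2)
           \<ge> (rnorm E r g)\<^sup>2 / tree_cond V E src tgt r T"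
proof -
  interpret spanning_tree_graph V E src tgt T
    using assms(1-3,6) by unfold_locales
  let ?a = "\<lambda>e. rinner E r g (cvec V T src tgt e)"
  have r_pos: "\<forall>e\<in>E. 0 < r e" using assms(4) by blast
  have "rinner E r g g = (\<Sum>e\<in>E - T. g e * ?a e)"
    using circulation_eq_sum_cvec assms(8) by (intro rinner_self_eq_combination) blast
  hence "rinner E r g g \<le> (\<Sum>e\<in>E - T. (?a e)\<^sup>2 / r e)"
    by (intro rinner_self_le_sum_sq_div[OF finite_E _ r_pos]) auto
  moreover have "(rnorm E r g)\<^sup>2 = rinner E r g g"
    unfolding rnorm_def using r_pos by (simp add: rinner_self_nonneg less_imp_le)
  moreover have "(\<Sum>e\<in>E - T. pe V E src tgt r T e * (rinner E r g (chat V E src tgt r T e))\<^sup>2)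
      = (\<Sum>e\<in>E - T. (?a e)\<^sup>2 / r e) / tree_cond V E src tgt r T"
    unfolding sum_divide_distrib
    using Rcyc_ge_resistance[OF r_pos] r_pos
    by (intro sum.cong refl pe_mult_rinner_chat_sq) (auto intro: less_le_trans)
  ultimately show ?thesis
    using tree_cond_pos[OF r_pos assms(7)] by (simp add: divide_right_mono)
qed

end
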